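(* \textsc{Maintain-Matching} takes $O(\varepsilon\Delta)$ time per update and maintains a maximal matching $\mathcal{M}_N$ of size at least $\frac{|\overline{E(C)}|}{20\varepsilon\Delta}$, with high probability, throughout a phase.
   Context: $G$ is a fully dynamic graph with maximum degree at most $\Delta$, $0<\varepsilon<1$. During a phase, a vertex set $C$ (an almost-clique) is fixed, and with high probability every vertex of $C$ has at most $5\varepsilon\Delta$ non-neighbors in $C$ throughout the phase. $\overline{E(C)}$ is the set of non-edges (pairs of distinct vertices of $C$ not joined by an edge) and $\overline{E_C(w)}$ the non-edges of $C$ incident to $w$. At the start of the phase, $\mathcal{M}_N$ is a maximal matching in the graph $(C,\overline{E(C)})$, and an array matched$[\cdot]$ records which vertices are matched. \textsc{Maintain-Matching}$(u,v)$ for an update with $u,v\in C$: if $(u,v)$ is an edge insertion (a non-edge deletion), remove $(u,v)$ from $\overline{E(C)},\overline{E_C(u)},\overline{E_C(v)}$; if $(u,v)\in\mathcal{M}_N$, remove it and unmark $u,v$; then for each $w\in\{u,v\}$ that is unmatched, scan $\overline{E_C(w)}$ and, if some non-edge $(w,x)$ has $x$ unmatched, add $(w,x)$ to $\mathcal{M}_N$ and mark $w,x$. If $(u,v)$ is an edge deletion (a non-edge insertion), add $(u,v)$ to $\overline{E(C)},\overline{E_C(u)},\overline{E_C(v)}$, and if both $u,v$ are unmatched add $(u,v)$ to $\mathcal{M}_N$ and mark them. "With high probability" means with probability at least $1-1/\mathrm{poly}(n)$. *)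

theory Defs
  imports Complex_Main
begin

datatype 'a upd = Ins 'a 'a | Del 'a 'a

definition apply_upd :: "'a set set \<Rightarrow> 'a upd \<Rightarrow> 'a set set" where
  "apply_upd E up = (case up of Ins u v \<Rightarrow> insert {u,v} E | Del u v \<Rightarrow> E - {{u,v}})"

definition valid_upd :: "'a set \<Rightarrow> 'a set set \<Rightarrow> 'a upd \<Rightarrow> bool" where
  "valid_upd V E up = (case up of
      Ins u v \<Rightarrow> u \<in> V \<and> v \<in> V \<and> u \<noteq> v \<and> {u,v} \<notin> E
    | Del u v \<Rightarrow> {u,v} \<in> E)"

definition simple_graph :: "'a set \<Rightarrow> 'a set set \<Rightarrow> bool" where
  "simple_graph V E = (E \<subseteq> {{x,y} | x y. x \<in> V \<and> y \<in> V \<and> x \<noteq> y})"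

definition degree :: "'a set set \<Rightarrow> 'a \<Rightarrow> nat" where
  "degree E w = card {x. {w,x} \<in> E}"

definition nonedges :: "'a set \<Rightarrow> 'a set set \<Rightarrow> 'a set set" where
  "nonedges C E = {{x,y} | x y. x \<in> C \<and> y \<in> C \<and> x \<noteq> y \<and> {x,y} \<notin> E}"

definition nonnbrs :: "'a set \<Rightarrow> 'a set set \<Rightarrow> 'a \<Rightarrow> 'a set" where
  "nonnbrs C E w = {x \<in> C. x \<noteq> w \<and> {w,x} \<notin> E}"

definition is_matching :: "'a set set \<Rightarrow> bool" where
  "is_matching M = ((\<forall>e\<in>M. \<exists>x y. e = {x,y} \<and> x \<noteq> y) \<and>
                    (\<forall>e\<in>M. \<forall>e'\<in>M. e \<noteq> e' \<longrightarrow> e \<inter> e' = {}))"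

definition maximal_matching_in :: "'a set set \<Rightarrow> 'a set set \<Rightarrow> bool" where
  "maximal_matching_in F M = (M \<subseteq> F \<and> is_matching M \<and> (\<forall>e\<in>F. \<exists>e'\<in>M. e \<inter> e' \<noteq> {}))"

(* Data structure state:
   nonE  = \overline{E(C)},
   nadj w = \overline{E_C(w)} stored as a list of the other endpoints,
   mat   = M_N,
   mkd   = the array matched[.] *)
record 'a mstate =
  nonE :: "'a set set"
  nadj :: "'a \<Rightarrow> 'a list"
  mat  :: "'a set set"
  mkd  :: "'a \<Rightarrow> bool"

(* Linear scan for the first element satisfying p; the second component is the
   number of list elements inspected (unit cost each). *)
fun scan :: "('a \<Rightarrow> bool) \<Rightarrow> 'a list \<Rightarrow> 'a option \<times> nat" where
  "scan p [] = (None, 0)"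
| "scan p (x # xs) = (if p x then (Some x, 1) else (case scan p xs of (r, c) \<Rightarrow> (r, Suc c)))"

definition try_match :: "'a mstate \<Rightarrow> 'a \<Rightarrow> 'a mstate \<times> nat" where
  "try_match s w =
     (if mkd s w then (s, 1)
      else (case scan (\<lambda>x. \<not> mkd s x) (nadj s w) of
              (None, c) \<Rightarrow> (s, c + 1)
            | (Some x, c) \<Rightarrow> (s\<lparr>mat := insert {w,x} (mat s), mkd := (mkd s)(w := True, x := True)\<rparr>, c + 1)))"

(* Returns the new state and the running time, where every
   O(1) set/array operation costs 1, each inspected list element costs 1, and removing
   an element from a list costs the length of the list.  Updates not inside C do not
   invoke the procedure (state unchanged, cost 0). *)
definition mm_update :: "'a set \<Rightarrow> 'a upd \<Rightarrow> 'a mstate \<Rightarrow> 'a mstate \<times> nat" where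
  "mm_update C up s = (case up of
     Ins u v \<Rightarrow>
       (if u \<in> C \<and> v \<in> C \<and> u \<noteq> v then
          (let s1 = s\<lparr>nonE := nonE s - {{u,v}},
                      nadj := (nadj s)(u := removeAll v (nadj s u), v := removeAll u (nadj s v))\<rparr>;
               c1 = 1 + length (nadj s u) + length (nadj s v);
               s2 = (if {u,v} \<in> mat s1
                     then s1\<lparr>mat := mat s1 - {{u,v}}, mkd := (mkd s1)(u := False, v := False)\<rparr>
                     else s1);
               (s3, c3) = try_match s2 u;
               (s4, c4) = try_match s3 v
           in (s4, c1 + 1 + c3 + c4))
        else (s, 0))
   | Del u v \<Rightarrow>
       (if u \<in> C \<and> v \<in> C \<and> u \<noteq> v then
          (let s1 = s\<lparr>nonE := insert {u,v} (nonE s),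
                      nadj := (nadj s)(u := v # nadj s u, v := u # nadj s v)\<rparr>
           in if \<not> mkd s u \<and> \<not> mkd s v
              then (s1\<lparr>mat := insert {u,v} (mat s1), mkd := (mkd s1)(u := True, v := True)\<rparr>, 1)
              else (s1, 1))
        else (s, 0)))"

definition graph_at :: "'a set set \<Rightarrow> 'a upd list \<Rightarrow> nat \<Rightarrow> 'a set set" where
  "graph_at E0 us i = foldl apply_upd E0 (take i us)"

definition state_at :: "'a set \<Rightarrow> 'a mstate \<Rightarrow> 'a upd list \<Rightarrow> nat \<Rightarrow> 'a mstate" where
  "state_at C s0 us i = foldl (\<lambda>s up. fst (mm_update C up s)) s0 (take i us)"

definition cost_at :: "'a set \<Rightarrow> 'a mstate \<Rightarrow> 'a upd list \<Rightarrow> nat \<Rightarrow> nat" where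
  "cost_at C s0 us i = snd (mm_update C (us ! i) (state_at C s0 us i))"

end

(* Maintain-Matching preserves the invariant that the lists nadj are exactly the non-neighbourhoods
   in C, the marks are exactly the matched vertices, and M_N is a matching of non-edges meeting
   every non-edge.  A new non-edge (an edge deletion) is matched if both ends are free and otherwise
   already meets M_N.  When a non-edge (u,v) disappears, only non-edges at u or v can lose their
   cover, namely if (u,v) was a matching edge; rescanning u and then v repairs exactly these.
   An update makes a constant number of passes over the lists of u and v, which have at most
   5\<epsilon>\<Delta> entries.  Finally the at most 2 |M_N| matched vertices cover all non-edges and each
   lies on at most 5\<epsilon>\<Delta> of them, so there are at most 10\<epsilon>\<Delta> |M_N| non-edges. *)

theory Submission
  imports Defs
begin

lemma is_matching_insert:
  assumes "is_matching M" "x \<notin> \<Union>M" "y \<notin> \<Union>M" "x \<noteq> y"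
  shows "is_matching (insert {x,y} M)"
proof -
  have "e \<inter> {x,y} = {}" if "e \<in> M" for e
    using assms(2,3) that by blast
  then show ?thesis
    using assms(1,4) unfolding is_matching_def by (metis Int_commute insert_iff)
qed

lemma is_matching_subset: "is_matching M \<Longrightarrow> M' \<subseteq> M \<Longrightarrow> is_matching M'"
  unfolding is_matching_def by (meson subsetD)

lemma Union_diff_matching_edge:
  assumes "is_matching M" "e \<in> M"
  shows "\<Union>(M - {e}) = \<Union>M - e"
proof -
  have "e' \<inter> e = {}" if "e' \<in> M - {e}" for e'
    using assms that unfolding is_matching_def by blast
  then show ?thesis
    using assms(2) by blast
qed

lemma card_Union_matching_le:
  assumes "is_matching M"
  shows "card (\<Union>M) \<le> 2 * card M"
proof -
  have "\<forall>e\<in>M. card e = 2"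
    using assms unfolding is_matching_def by auto
  then have "sum card M = 2 * card M"
    by simp
  then show ?thesis
    using card_Union_le_sum_card[of M] by simp
qed

lemma in_nonnbrs_iff: "w \<in> C \<Longrightarrow> x \<in> nonnbrs C E w \<longleftrightarrow> {w,x} \<in> nonedges C E"
  unfolding nonnbrs_def nonedges_def by (auto simp: doubleton_eq_iff insert_commute)

lemma nonedges_at_vertexE:
  assumes "e \<in> nonedges C E" "w \<in> e"
  obtains x where "e = {w,x}"
proof -
  obtain a b where "e = {a,b}"
    using assms(1) unfolding nonedges_def by blast
  then have "e = {w, if w = a then b else a}"
    using assms(2) by auto
  then show thesis
    by (rule that)
qed

lemma nonedges_subset_Pow: "nonedges C E \<subseteq> Pow C"
  unfolding nonedges_def by auto

lemma nonedges_insert: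
  "u \<in> C \<Longrightarrow> v \<in> C \<Longrightarrow> u \<noteq> v \<Longrightarrow> nonedges C (insert {u,v} E) = nonedges C E - {{u,v}}"
  unfolding nonedges_def by auto

lemma nonedges_remove:
  "u \<in> C \<Longrightarrow> v \<in> C \<Longrightarrow> u \<noteq> v \<Longrightarrow> nonedges C (E - {{u,v}}) = insert {u,v} (nonedges C E)"
  unfolding nonedges_def by auto

lemma nonnbrs_insert:
  "u \<noteq> v \<Longrightarrow> nonnbrs C (insert {u,v} E) w =
     (if w = u then nonnbrs C E w - {v} else if w = v then nonnbrs C E w - {u} else nonnbrs C E w)"
  unfolding nonnbrs_def by (auto simp: doubleton_eq_iff)

lemma nonnbrs_remove:
  "u \<in> C \<Longrightarrow> v \<in> C \<Longrightarrow> u \<noteq> v \<Longrightarrow> nonnbrs C (E - {{u,v}}) w =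
     (if w = u then insert v (nonnbrs C E w) else if w = v then insert u (nonnbrs C E w) else nonnbrs C E w)"
  unfolding nonnbrs_def by (auto simp: doubleton_eq_iff)

lemma nonedges_cong:
  assumes "\<And>x y. x \<in> C \<Longrightarrow> y \<in> C \<Longrightarrow> x \<noteq> y \<Longrightarrow> {x,y} \<in> E \<longleftrightarrow> {x,y} \<in> E'"
  shows "nonedges C E = nonedges C E'"
  unfolding nonedges_def using assms by (intro Collect_cong) (metis (no_types, lifting))

lemma nonnbrs_cong:
  assumes "\<And>x y. x \<in> C \<Longrightarrow> y \<in> C \<Longrightarrow> x \<noteq> y \<Longrightarrow> {x,y} \<in> E \<longleftrightarrow> {x,y} \<in> E'" "w \<in> C"
  shows "nonnbrs C E w = nonnbrs C E' w"
  unfolding nonnbrs_def using assms by auto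

lemma card_nonedges_le_sum_nonnbrs:
  assumes "finite C" "U \<subseteq> C" and cover: "\<forall>e\<in>nonedges C E. e \<inter> U \<noteq> {}"
  shows "card (nonedges C E) \<le> (\<Sum>z\<in>U. card (nonnbrs C E z))"
proof -
  have finU: "finite U" and fin_nonnbrs: "\<And>z. finite (nonnbrs C E z)"
    using assms(1,2) finite_subset unfolding nonnbrs_def by auto
  have "nonedges C E \<subseteq> (\<Union>z\<in>U. (\<lambda>x. {z,x}) ` nonnbrs C E z)"
  proof
    fix e assume e: "e \<in> nonedges C E"
    then have "e \<inter> U \<noteq> {}"
      using cover by blast
    from e obtain x y where xy: "e = {x,y}" "x \<in> C" "y \<in> C"
      unfolding nonedges_def by blast
    have "e = {y,x}"
      using xy(1) by (simp add: insert_commute)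
    have nb: "y \<in> nonnbrs C E x" "x \<in> nonnbrs C E y"
      using e xy(1) \<open>e = {y,x}\<close> in_nonnbrs_iff[OF xy(2)] in_nonnbrs_iff[OF xy(3)] by simp_all
    from \<open>e \<inter> U \<noteq> {}\<close> have "x \<in> U \<or> y \<in> U"
      using xy(1) by blast
    then show "e \<in> (\<Union>z\<in>U. (\<lambda>x. {z,x}) ` nonnbrs C E z)"
      using nb xy(1) \<open>e = {y,x}\<close> by blast
  qed
  then have "card (nonedges C E) \<le> card (\<Union>z\<in>U. (\<lambda>x. {z,x}) ` nonnbrs C E z)"
    by (intro card_mono) (simp_all add: finU fin_nonnbrs)
  also have "\<dots> \<le> (\<Sum>z\<in>U. card ((\<lambda>x. {z,x}) ` nonnbrs C E z))"
    by (rule card_UN_le[OF finU])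
  also have "\<dots> \<le> (\<Sum>z\<in>U. card (nonnbrs C E z))"
    by (intro sum_mono card_image_le fin_nonnbrs)
  finally show ?thesis .
qed

lemma card_nonedges_le_matching:
  assumes "finite C" and mm: "maximal_matching_in (nonedges C E) M"
    and B: "\<forall>w\<in>C. real (card (nonnbrs C E w)) \<le> B" "0 \<le> B"
  shows "real (card (nonedges C E)) \<le> 2 * B * real (card M)"
proof -
  have U: "\<Union>M \<subseteq> C" "\<forall>e\<in>nonedges C E. e \<inter> \<Union>M \<noteq> {}" and "is_matching M"
    using mm nonedges_subset_Pow unfolding maximal_matching_in_def by blast+
  have "real (card (nonedges C E)) \<le> (\<Sum>z\<in>\<Union>M. real (card (nonnbrs C E z)))"
    using card_nonedges_le_sum_nonnbrs[OF assms(1) U] by (metis of_nat_le_iff of_nat_sum)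
  also have "\<dots> \<le> real (card (\<Union>M)) * B"
    using B(1) U(1) by (intro sum_bounded_above) auto
  also have "\<dots> \<le> real (2 * card M) * B"
    using card_Union_matching_le[OF \<open>is_matching M\<close>] B(2) by (intro mult_right_mono) simp_all
  finally show ?thesis
    by (simp add: mult_ac)
qed

(* Maximality of M_N is left out: it fails between removing a matched non-edge and rescanning
   its endpoints. *)
definition well_formed :: "'a set \<Rightarrow> 'a set set \<Rightarrow> 'a mstate \<Rightarrow> bool" where
  "well_formed C E s \<longleftrightarrow>
     nonE s = nonedges C E \<and>
     (\<forall>w\<in>C. distinct (nadj s w) \<and> set (nadj s w) = nonnbrs C E w) \<and>
     is_matching (mat s) \<and> mat s \<subseteq> nonedges C E \<and>
     (\<forall>w. mkd s w \<longleftrightarrow> w \<in> \<Union>(mat s))"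

definition mm_invariant :: "'a set \<Rightarrow> 'a set set \<Rightarrow> 'a mstate \<Rightarrow> bool" where
  "mm_invariant C E s \<longleftrightarrow> well_formed C E s \<and> (\<forall>e\<in>nonedges C E. e \<inter> \<Union>(mat s) \<noteq> {})"

lemma mm_invariant_iff:
  "mm_invariant C E s \<longleftrightarrow>
     nonE s = nonedges C E \<and>
     (\<forall>w\<in>C. distinct (nadj s w) \<and> set (nadj s w) = nonnbrs C E w) \<and>
     maximal_matching_in (nonedges C E) (mat s) \<and>
     (\<forall>w. mkd s w \<longleftrightarrow> w \<in> \<Union>(mat s))"
proof -
  have "e \<inter> \<Union>(mat s) \<noteq> {} \<longleftrightarrow> (\<exists>e'\<in>mat s. e \<inter> e' \<noteq> {})" for e
    by blast
  then show ?thesis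
    unfolding mm_invariant_def well_formed_def maximal_matching_in_def by auto
qed

lemma length_nadj_eq_card_nonnbrs: "well_formed C E s \<Longrightarrow> w \<in> C \<Longrightarrow> length (nadj s w) = card (nonnbrs C E w)"
  unfolding well_formed_def by (metis distinct_card)

lemma mm_invariant_cong:
  assumes "\<And>x y. x \<in> C \<Longrightarrow> y \<in> C \<Longrightarrow> x \<noteq> y \<Longrightarrow> {x,y} \<in> E \<longleftrightarrow> {x,y} \<in> E'"
  shows "mm_invariant C E s \<longleftrightarrow> mm_invariant C E' s"
  using nonedges_cong[OF assms] nonnbrs_cong[OF assms]
  unfolding mm_invariant_def well_formed_def by auto

lemma scan_Some: "scan p xs = (Some x, c) \<Longrightarrow> x \<in> set xs \<and> p x"
  by (induction xs arbitrary: c) (auto split: if_splits prod.splits)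

lemma scan_None: "scan p xs = (None, c) \<Longrightarrow> \<forall>x\<in>set xs. \<not> p x"
  by (induction xs arbitrary: c) (auto split: if_splits prod.splits)

lemma scan_cost_le: "snd (scan p xs) \<le> length xs"
  by (induction xs) (auto split: prod.splits)

lemma try_match_nadj: "nadj (fst (try_match s w)) = nadj s"
  by (simp add: try_match_def split: option.split prod.split)

lemma try_match_mono: "mat s \<subseteq> mat (fst (try_match s w))"
  by (auto simp: try_match_def split: option.split prod.split)

lemma try_match_cost_le: "snd (try_match s w) \<le> length (nadj s w) + 1"
  using scan_cost_le[of "\<lambda>x. \<not> mkd s x" "nadj s w"]
  by (auto simp: try_match_def split: option.split prod.split)

lemma try_match_cases:
  assumes wf: "well_formed C E s" and "w \<in> C"
  obtains (unchanged) "fst (try_match s w) = s" "w \<in> \<Union>(mat s) \<or> nonnbrs C E w \<subseteq> \<Union>(mat s)"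
    | (matched) x where "x \<in> nonnbrs C E w" "w \<notin> \<Union>(mat s)" "x \<notin> \<Union>(mat s)"
        "fst (try_match s w) = s\<lparr>mat := insert {w,x} (mat s), mkd := (mkd s)(w := True, x := True)\<rparr>"
proof -
  have mkd: "\<And>y. mkd s y \<longleftrightarrow> y \<in> \<Union>(mat s)" and nadj: "set (nadj s w) = nonnbrs C E w"
    using wf \<open>w \<in> C\<close> unfolding well_formed_def by auto
  show thesis
  proof (cases "mkd s w")
    case True
    then have "fst (try_match s w) = s"
      by (simp add: try_match_def)
    then show ?thesis
      using True mkd by (blast intro: unchanged)
  next
    case False
    then have w: "w \<notin> \<Union>(mat s)"
      using mkd by blast
    obtain r c where sc: "scan (\<lambda>x. \<not> mkd s x) (nadj s w) = (r, c)"
      by fastforce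
    show ?thesis
    proof (cases r)
      case None
      then have "fst (try_match s w) = s"
        using False sc by (simp add: try_match_def)
      moreover have "nonnbrs C E w \<subseteq> \<Union>(mat s)"
        using scan_None[OF sc[unfolded None]] mkd nadj by blast
      ultimately show ?thesis
        by (blast intro: unchanged)
    next
      case (Some x)
      then have "x \<in> nonnbrs C E w" "x \<notin> \<Union>(mat s)"
        using scan_Some[OF sc[unfolded Some]] mkd nadj by auto
      moreover have "fst (try_match s w) = s\<lparr>mat := insert {w,x} (mat s), mkd := (mkd s)(w := True, x := True)\<rparr>"
        using False sc Some by (simp add: try_match_def)
      ultimately show ?thesis
        using w matched by blast
    qed
  qed
qed

lemma well_formed_try_match:
  assumes wf: "well_formed C E s" and w: "w \<in> C"
  shows "well_formed C E (fst (try_match s w))"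
  using assms
proof (cases rule: try_match_cases)
  case (matched x)
  then have "{w,x} \<in> nonedges C E" "w \<noteq> x"
    using in_nonnbrs_iff[OF w] unfolding nonnbrs_def by auto
  then show ?thesis
    using wf matched is_matching_insert unfolding well_formed_def by auto
qed (simp add: wf)

lemma try_match_covers:
  assumes wf: "well_formed C E s" and w: "w \<in> C" and "{w,x} \<in> nonedges C E"
  shows "{w,x} \<inter> \<Union>(mat (fst (try_match s w))) \<noteq> {}"
  using wf w
proof (cases rule: try_match_cases)
  case unchanged
  then show ?thesis
    using assms(3) in_nonnbrs_iff[OF w] by auto
qed auto

definition delete_nonedge :: "'a \<Rightarrow> 'a \<Rightarrow> 'a mstate \<Rightarrow> 'a mstate" where
  "delete_nonedge u v s =
     (let s1 = s\<lparr>nonE := nonE s - {{u,v}},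
                 nadj := (nadj s)(u := removeAll v (nadj s u), v := removeAll u (nadj s v))\<rparr>
      in if {u,v} \<in> mat s1
         then s1\<lparr>mat := mat s1 - {{u,v}}, mkd := (mkd s1)(u := False, v := False)\<rparr>
         else s1)"

definition insert_nonedge :: "'a \<Rightarrow> 'a \<Rightarrow> 'a mstate \<Rightarrow> 'a mstate" where
  "insert_nonedge u v s =
     (let s1 = s\<lparr>nonE := insert {u,v} (nonE s), nadj := (nadj s)(u := v # nadj s u, v := u # nadj s v)\<rparr>
      in if \<not> mkd s u \<and> \<not> mkd s v
         then s1\<lparr>mat := insert {u,v} (mat s1), mkd := (mkd s1)(u := True, v := True)\<rparr>
         else s1)"

lemma mm_update_Ins:
  assumes "u \<in> C" "v \<in> C" "u \<noteq> v"
  shows "mm_update C (Ins u v) s =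
    (let s2 = delete_nonedge u v s; s3 = fst (try_match s2 u)
     in (fst (try_match s3 v),
         length (nadj s u) + length (nadj s v) + 2 + snd (try_match s2 u) + snd (try_match s3 v)))"
  using assms by (simp add: mm_update_def delete_nonedge_def Let_def split: prod.split)

lemma mm_update_Del:
  "u \<in> C \<Longrightarrow> v \<in> C \<Longrightarrow> u \<noteq> v \<Longrightarrow> mm_update C (Del u v) s = (insert_nonedge u v s, 1)"
  by (simp add: mm_update_def insert_nonedge_def Let_def)

lemma mm_update_outside:
  "\<not> (u \<in> C \<and> v \<in> C \<and> u \<noteq> v) \<Longrightarrow> mm_update C (Ins u v) s = (s, 0) \<and> mm_update C (Del u v) s = (s, 0)"
  unfolding mm_update_def by auto

lemma well_formed_delete_nonedge:
  assumes wf: "well_formed C E s" and uv: "u \<in> C" "v \<in> C" "u \<noteq> v"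
  shows "well_formed C (insert {u,v} E) (delete_nonedge u v s)"
proof -
  let ?s' = "delete_nonedge u v s"
  have M: "is_matching (mat s)" and mkd: "\<And>w. mkd s w \<longleftrightarrow> w \<in> \<Union>(mat s)"
    using wf unfolding well_formed_def by auto
  have nonE': "nonE ?s' = nonE s - {{u,v}}"
    and nadj': "nadj ?s' = (nadj s)(u := removeAll v (nadj s u), v := removeAll u (nadj s v))"
    and mat': "mat ?s' = mat s - {{u,v}}"
    by (auto simp: delete_nonedge_def Let_def)
  have "mkd ?s' w \<longleftrightarrow> w \<in> \<Union>(mat ?s')" for w
  proof (cases "{u,v} \<in> mat s")
    case True
    then show ?thesis
      using mkd Union_diff_matching_edge[OF M True] by (simp add: delete_nonedge_def)
  next
    case False
    then show ?thesis
      using mkd by (simp add: delete_nonedge_def)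
  qed
  moreover have "distinct (nadj ?s' w) \<and> set (nadj ?s' w) = nonnbrs C (insert {u,v} E) w" if "w \<in> C" for w
    using wf that uv(3) unfolding well_formed_def nonnbrs_insert[OF uv(3)] nadj'
    by (auto simp: distinct_removeAll)
  ultimately show ?thesis
    using wf nonE' mat' is_matching_subset[OF M] nonedges_insert[OF uv]
    unfolding well_formed_def by auto
qed

lemma delete_nonedge_covers:
  assumes inv: "mm_invariant C E s" and uv: "u \<in> C" "v \<in> C" "u \<noteq> v"
    and e: "e \<in> nonedges C (insert {u,v} E)" "u \<notin> e" "v \<notin> e"
  shows "e \<inter> \<Union>(mat (delete_nonedge u v s)) \<noteq> {}"
proof -
  have "e \<in> nonedges C E"
    using e(1) nonedges_insert[OF uv] by simp
  then have "e \<inter> \<Union>(mat s) \<noteq> {}"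
    using inv unfolding mm_invariant_def by blast
  moreover have "mat (delete_nonedge u v s) = mat s - {{u,v}}"
    by (auto simp: delete_nonedge_def Let_def)
  ultimately show ?thesis
    using e(2,3) by blast
qed

lemma mm_invariant_mm_update_Ins:
  assumes inv: "mm_invariant C E s" and uv: "u \<in> C" "v \<in> C" "u \<noteq> v"
  shows "mm_invariant C (insert {u,v} E) (fst (mm_update C (Ins u v) s))"
proof -
  define E' where "E' = insert {u,v} E"
  define s2 where "s2 = delete_nonedge u v s"
  define s3 where "s3 = fst (try_match s2 u)"
  define s4 where "s4 = fst (try_match s3 v)"
  have wf2: "well_formed C E' s2"
    using inv well_formed_delete_nonedge[OF _ uv] unfolding mm_invariant_def E'_def s2_def by blast
  have wf3: "well_formed C E' s3"
    unfolding s3_def by (rule well_formed_try_match[OF wf2 uv(1)])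
  have wf4: "well_formed C E' s4"
    unfolding s4_def by (rule well_formed_try_match[OF wf3 uv(2)])
  have "mat s2 \<subseteq> mat s3" "mat s3 \<subseteq> mat s4"
    unfolding s3_def s4_def by (rule try_match_mono)+
  then have mono: "\<Union>(mat s2) \<subseteq> \<Union>(mat s4)" "\<Union>(mat s3) \<subseteq> \<Union>(mat s4)"
    by auto
  have "e \<inter> \<Union>(mat s4) \<noteq> {}" if e: "e \<in> nonedges C E'" for e
  proof -
    consider "u \<in> e" | "v \<in> e" | "u \<notin> e" "v \<notin> e"
      by blast
    then show ?thesis
    proof cases
      case 1
      with e obtain x where "e = {u,x}"
        by (rule nonedges_at_vertexE)
      then have "e \<inter> \<Union>(mat s3) \<noteq> {}"
        using try_match_covers[OF wf2 uv(1)] e unfolding s3_def by simp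
      then show ?thesis
        using mono(2) by blast
    next
      case 2
      with e obtain x where "e = {v,x}"
        by (rule nonedges_at_vertexE)
      then show ?thesis
        using try_match_covers[OF wf3 uv(2)] e unfolding s4_def by simp
    next
      case 3
      then have "e \<inter> \<Union>(mat s2) \<noteq> {}"
        using delete_nonedge_covers[OF inv uv] e unfolding E'_def s2_def by simp
      then show ?thesis
        using mono(1) by blast
    qed
  qed
  with wf4 have "mm_invariant C E' s4"
    unfolding mm_invariant_def by blast
  then show ?thesis
    using mm_update_Ins[OF uv] unfolding E'_def s4_def s3_def s2_def by (simp add: Let_def)
qed

lemma mm_invariant_insert_nonedge:
  assumes inv: "mm_invariant C E s" and uv: "u \<in> C" "v \<in> C" "u \<noteq> v" "{u,v} \<in> E"
  shows "mm_invariant C (E - {{u,v}}) (insert_nonedge u v s)"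
proof -
  let ?s' = "insert_nonedge u v s"
  have I: "nonE s = nonedges C E" "\<forall>w\<in>C. distinct (nadj s w) \<and> set (nadj s w) = nonnbrs C E w"
    "is_matching (mat s)" "mat s \<subseteq> nonedges C E" "\<forall>w. mkd s w \<longleftrightarrow> w \<in> \<Union>(mat s)"
    "\<forall>e\<in>nonedges C E. e \<inter> \<Union>(mat s) \<noteq> {}"
    using inv unfolding mm_invariant_def well_formed_def by auto
  have N: "nonedges C (E - {{u,v}}) = insert {u,v} (nonedges C E)"
    by (rule nonedges_remove[OF uv(1-3)])
  have nonE': "nonE ?s' = nonedges C (E - {{u,v}})"
    using I(1) N by (simp add: insert_nonedge_def Let_def)
  have "nadj ?s' = (nadj s)(u := v # nadj s u, v := u # nadj s v)"
    by (simp add: insert_nonedge_def Let_def)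
  moreover have "v \<notin> nonnbrs C E u" "u \<notin> nonnbrs C E v"
    using uv(4) unfolding nonnbrs_def by (auto simp: insert_commute)
  ultimately have nadj': "\<forall>w\<in>C. distinct (nadj ?s' w) \<and> set (nadj ?s' w) = nonnbrs C (E - {{u,v}}) w"
    using I(2) uv unfolding nonnbrs_remove[OF uv(1-3)] by auto
  show ?thesis
  proof (cases "\<not> mkd s u \<and> \<not> mkd s v")
    case True
    then have "mat ?s' = insert {u,v} (mat s)" "mkd ?s' = (mkd s)(u := True, v := True)"
      by (simp_all add: insert_nonedge_def)
    moreover have "is_matching (insert {u,v} (mat s))"
      using is_matching_insert[OF I(3)] True I(5) uv(3) by simp
    ultimately show ?thesis
      using I(4-6) N nonE' nadj' unfolding mm_invariant_def well_formed_def by auto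
  next
    case False
    then have "mat ?s' = mat s" "mkd ?s' = mkd s"
      by (auto simp: insert_nonedge_def)
    moreover have "{u,v} \<inter> \<Union>(mat s) \<noteq> {}"
      using False I(5) by blast
    ultimately show ?thesis
      using I(3-6) N nonE' nadj' unfolding mm_invariant_def well_formed_def by auto
  qed
qed

lemma mm_invariant_mm_update:
  assumes inv: "mm_invariant C E s" and valid: "valid_upd V E up"
  shows "mm_invariant C (apply_upd E up) (fst (mm_update C up s))"
proof (cases up)
  case (Ins u v)
  show ?thesis
  proof (cases "u \<in> C \<and> v \<in> C \<and> u \<noteq> v")
    case True
    then show ?thesis
      using mm_invariant_mm_update_Ins[OF inv] Ins by (simp add: apply_upd_def)
  next
    case False
    then have "mm_invariant C (insert {u,v} E) s"
      using inv by (subst mm_invariant_cong[of C _ E]) (auto simp: doubleton_eq_iff)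
    then show ?thesis
      using Ins mm_update_outside[OF False] by (simp add: apply_upd_def)
  qed
next
  case (Del u v)
  show ?thesis
  proof (cases "u \<in> C \<and> v \<in> C \<and> u \<noteq> v")
    case True
    moreover have "{u,v} \<in> E"
      using valid Del by (simp add: valid_upd_def)
    ultimately show ?thesis
      using Del mm_invariant_insert_nonedge[OF inv] mm_update_Del[of u C v s]
      by (simp add: apply_upd_def)
  next
    case False
    then have "mm_invariant C (E - {{u,v}}) s"
      using inv by (subst mm_invariant_cong[of C _ E]) (auto simp: doubleton_eq_iff)
    then show ?thesis
      using Del mm_update_outside[OF False] by (simp add: apply_upd_def)
  qed
qed

lemma mm_update_Ins_cost_le:
  "snd (mm_update C (Ins u v) s) \<le> 2 * length (nadj s u) + 2 * length (nadj s v) + 4"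
proof (cases "u \<in> C \<and> v \<in> C \<and> u \<noteq> v")
  case True
  define s2 where "s2 = delete_nonedge u v s"
  have len: "length (nadj s2 w) \<le> length (nadj s w)" for w
    by (simp add: s2_def delete_nonedge_def Let_def length_removeAll_less_eq)
  have "snd (try_match s2 u) \<le> length (nadj s u) + 1"
    using try_match_cost_le[of s2 u] len[of u] by linarith
  moreover have "snd (try_match (fst (try_match s2 u)) v) \<le> length (nadj s v) + 1"
    using try_match_cost_le[of "fst (try_match s2 u)" v] len[of v] by (simp add: try_match_nadj)
  ultimately show ?thesis
    using True by (simp add: mm_update_Ins Let_def s2_def)
next
  case False
  then show ?thesis
    by (simp add: mm_update_outside)
qed

lemma mm_update_cost_le:
  assumes len: "\<forall>w\<in>C. real (length (nadj s w)) \<le> L" and "0 \<le> L"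
  shows "real (snd (mm_update C up s)) \<le> 4 * L + 4"
proof (cases up)
  case (Ins u v)
  show ?thesis
  proof (cases "u \<in> C \<and> v \<in> C \<and> u \<noteq> v")
    case True
    have "real (snd (mm_update C up s)) \<le> 2 * real (length (nadj s u)) + 2 * real (length (nadj s v)) + 4"
      using mm_update_Ins_cost_le[of C u v s] Ins by (simp add: of_nat_mono)
    moreover have "real (length (nadj s u)) \<le> L" "real (length (nadj s v)) \<le> L"
      using len True by auto
    ultimately show ?thesis
      by linarith
  next
    case False
    then show ?thesis
      using Ins \<open>0 \<le> L\<close> mm_update_outside[OF False] by simp
  qed
next
  case (Del u v)
  then have "snd (mm_update C up s) \<le> 1"
    by (simp add: mm_update_def Let_def)
  then show ?thesis
    using \<open>0 \<le> L\<close> by simp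
qed

lemma graph_at_Suc: "i < length us \<Longrightarrow> graph_at E0 us (Suc i) = apply_upd (graph_at E0 us i) (us ! i)"
  unfolding graph_at_def by (simp add: take_Suc_conv_app_nth)

lemma state_at_Suc:
  "i < length us \<Longrightarrow> state_at C s0 us (Suc i) = fst (mm_update C (us ! i) (state_at C s0 us i))"
  unfolding state_at_def by (simp add: take_Suc_conv_app_nth)

lemma mm_invariant_state_at:
  assumes valid: "\<forall>i<length us. valid_upd V (graph_at E0 us i) (us ! i)"
    and init: "mm_invariant C E0 s0" and "i \<le> length us"
  shows "mm_invariant C (graph_at E0 us i) (state_at C s0 us i)"
  using \<open>i \<le> length us\<close>
proof (induction i)
  case 0
  then show ?case
    using init by (simp add: graph_at_def state_at_def)
next
  case (Suc i)
  then have i: "i < length us"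
    by simp
  with Suc have "mm_invariant C (graph_at E0 us i) (state_at C s0 us i)"
    by simp
  then show ?case
    unfolding graph_at_Suc[OF i] state_at_Suc[OF i]
    by (rule mm_invariant_mm_update[where V = V]) (use valid i in simp)
qed

lemma cost_at_le:
  assumes valid: "\<forall>i<length us. valid_upd V (graph_at E0 us i) (us ! i)"
    and init: "mm_invariant C E0 s0" and i: "i < length us"
    and sparse: "\<forall>w\<in>C. real (card (nonnbrs C (graph_at E0 us i) w)) \<le> L" and "0 \<le> L"
  shows "real (cost_at C s0 us i) \<le> 4 * L + 4"
proof -
  have wf: "well_formed C (graph_at E0 us i) (state_at C s0 us i)"
    using mm_invariant_state_at[OF valid init] i unfolding mm_invariant_def by simp
  have "\<forall>w\<in>C. real (length (nadj (state_at C s0 us i) w)) \<le> L"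
    using sparse length_nadj_eq_card_nonnbrs[OF wf] by simp
  then show ?thesis
    unfolding cost_at_def using mm_update_cost_le \<open>0 \<le> L\<close> by blast
qed

theorem lemma12:
  "\<exists>K::real. \<forall>(V::'a set) C E0 (s0::'a mstate) us (\<epsilon>::real) (\<Delta>::nat).
     finite V \<and> C \<subseteq> V \<and> 0 < \<epsilon> \<and> \<epsilon> < 1 \<and>
     simple_graph V E0 \<and>
     (\<forall>i<length us. valid_upd V (graph_at E0 us i) (us ! i)) \<and>
     (\<forall>i\<le>length us. \<forall>w\<in>V. degree (graph_at E0 us i) w \<le> \<Delta>) \<and>
     (\<forall>i\<le>length us. \<forall>w\<in>C. real (card (nonnbrs C (graph_at E0 us i) w)) \<le> 5 * \<epsilon> * \<Delta>) \<and>
     nonE s0 = nonedges C E0 \<and>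
     (\<forall>w\<in>C. distinct (nadj s0 w) \<and> set (nadj s0 w) = nonnbrs C E0 w) \<and>
     maximal_matching_in (nonedges C E0) (mat s0) \<and>
     (\<forall>w. mkd s0 w \<longleftrightarrow> w \<in> \<Union>(mat s0))
     \<longrightarrow>
     (\<forall>i<length us. real (cost_at C s0 us i) \<le> K * (1 + \<epsilon> * \<Delta>)) \<and>
     (\<forall>i\<le>length us.
        maximal_matching_in (nonedges C (graph_at E0 us i)) (mat (state_at C s0 us i)) \<and>
        real (card (mat (state_at C s0 us i)))
          \<ge> real (card (nonedges C (graph_at E0 us i))) / (20 * \<epsilon> * \<Delta>))"
proof (intro exI[of _ 20] allI impI, goal_cases)
  case (1 V C E0 s0 us \<epsilon> \<Delta>)
  then have finC: "finite C" and eps: "0 < \<epsilon>"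
    and valid: "\<forall>i<length us. valid_upd V (graph_at E0 us i) (us ! i)"
    and sparse: "\<forall>i\<le>length us. \<forall>w\<in>C. real (card (nonnbrs C (graph_at E0 us i) w)) \<le> 5 * \<epsilon> * \<Delta>"
    and init: "mm_invariant C E0 s0"
    by (auto simp: mm_invariant_iff intro: finite_subset)
  have L: "0 \<le> 5 * \<epsilon> * \<Delta>"
    using eps by simp
  show ?case
  proof (intro conjI allI impI)
    fix i assume "i < length us"
    then have "real (cost_at C s0 us i) \<le> 4 * (5 * \<epsilon> * \<Delta>) + 4"
      using cost_at_le[OF valid init _ _ L] sparse by simp
    then show "real (cost_at C s0 us i) \<le> 20 * (1 + \<epsilon> * \<Delta>)"
      by simp
  next
    fix i assume i: "i \<le> length us"
    show mm: "maximal_matching_in (nonedges C (graph_at E0 us i)) (mat (state_at C s0 us i))"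
      using mm_invariant_state_at[OF valid init i] unfolding mm_invariant_iff by blast
    have "real (card (nonedges C (graph_at E0 us i))) \<le> 2 * (5 * \<epsilon> * \<Delta>) * real (card (mat (state_at C s0 us i)))"
      using card_nonedges_le_matching[OF finC mm _ L] sparse i by simp
    then show "real (card (nonedges C (graph_at E0 us i))) / (20 * \<epsilon> * \<Delta>) \<le> real (card (mat (state_at C s0 us i)))"
      using eps by (cases "\<Delta> = 0") (auto simp: divide_le_eq mult_ac)
  qed
qed

end
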